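(* Let $A$ be an antilinear operator on a complex $n$-dimensional space $W$ and let $\lambda>0$ be real. For integers $k\ge 0$ put $W_\lambda^{(k)}=\ker(A^2-\lambda^2I)^k$ and, for $k\ge1$, $W_\lambda^{(k)\pm}=\{x\in W:(A\mp\lambda I)(A^2-\lambda^2I)^{k-1}x=0\}$ (real subspaces of $W$ containing $W_\lambda^{(k-1)}$). Then for every positive integer $k$, as real vector spaces, $$W_\lambda^{(k)}/W_\lambda^{(k-1)}=W_\lambda^{(k)+}/W_\lambda^{(k-1)}\ \oplus\ W_\lambda^{(k)-}/W_\lambda^{(k-1)},$$ and moreover $W_\lambda^{(k)}/W_\lambda^{(k-1)}=\mathrm{span}_{\mathbb C}\bigl(W_\lambda^{(k)+}/W_\lambda^{(k-1)}\bigr)$.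
   Context: An antilinear operator satisfies $A(zv+w)=\bar z Av+Aw$; $A^2$ is then complex linear and commutes with $A$. Since $\lambda$ is real, $A\mp\lambda I$ is antilinear, so $W_\lambda^{(k)\pm}$ are real (not necessarily complex) subspaces. *)

theory Defs
  imports "HOL-Analysis.Analysis"
begin

text \<open>The complex n-dimensional space W is modelled as complex^'n (n = CARD('n)).
  Complex scalar multiplication is (*s); real scalar multiplication is scaleR.\<close>

definition antilinear :: "(complex^'n \<Rightarrow> complex^'n) \<Rightarrow> bool" where
  "antilinear A \<longleftrightarrow> (\<forall>z v w. A (z *s v + w) = cnj z *s A v + A w)"

definition sqop :: "(complex^'n \<Rightarrow> complex^'n) \<Rightarrow> real \<Rightarrow> complex^'n \<Rightarrow> complex^'n" where
  "sqop A l x = A (A x) - (l^2) *\<^sub>R x"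

definition Wk :: "(complex^'n \<Rightarrow> complex^'n) \<Rightarrow> real \<Rightarrow> nat \<Rightarrow> (complex^'n) set" where
  "Wk A l k = {x. (sqop A l ^^ k) x = 0}"

definition Wplus :: "(complex^'n \<Rightarrow> complex^'n) \<Rightarrow> real \<Rightarrow> nat \<Rightarrow> (complex^'n) set" where
  "Wplus A l k = {x. A ((sqop A l ^^ (k-1)) x) - l *\<^sub>R ((sqop A l ^^ (k-1)) x) = 0}"

definition Wminus :: "(complex^'n \<Rightarrow> complex^'n) \<Rightarrow> real \<Rightarrow> nat \<Rightarrow> (complex^'n) set" where
  "Wminus A l k = {x. A ((sqop A l ^^ (k-1)) x) + l *\<^sub>R ((sqop A l ^^ (k-1)) x) = 0}"

end

theory Submission
  imports Defs
begin

text \<open>Put \<open>T = (A\<^sup>2 - \<lambda>\<^sup>2 I)\<^sup>k\<^sup>-\<^sup>1\<close>. It is complex linear and commutes with \<open>A\<close>, so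
  \<open>W(k)\<close>, \<open>W(k)\<plusminus>\<close> and \<open>W(k-1)\<close> are the preimages under \<open>T\<close> of \<open>ker (A\<^sup>2 - \<lambda>\<^sup>2 I)\<close>,
  \<open>ker (A \<mp> \<lambda> I)\<close> and \<open>0\<close>. On \<open>ker (A\<^sup>2 - \<lambda>\<^sup>2 I)\<close> the real maps \<open>(A \<plusminus> \<lambda> I)/(\<plusminus>2\<lambda>)\<close> are
  complementary projections onto the \<open>\<plusminus>\<lambda>\<close>-eigenspaces of \<open>A\<close>, and they commute with \<open>T\<close>;
  this gives the direct sum. Since \<open>A (i v) = -i A v\<close>, multiplication by \<open>i\<close> maps \<open>W(k)-\<close>
  into \<open>W(k)+\<close>, so \<open>W(k)-\<close> lies in the complex span of \<open>W(k)+\<close>.\<close>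

lemma scaleR_eq_of_real_smult: "r *\<^sub>R (v :: complex^'n) = complex_of_real r *s v"
  by (simp add: vec_eq_iff scaleR_conv_of_real[where 'a=complex])

lemma antilinear_add: "antilinear A \<Longrightarrow> A (v + w) = A v + A w"
  unfolding antilinear_def by (metis complex_cnj_one vector_smult_lid)

lemma antilinear_0: "antilinear A \<Longrightarrow> A 0 = 0"
  using antilinear_add[of A 0 0] by simp

lemma antilinear_smult: "antilinear A \<Longrightarrow> A (z *s v) = cnj z *s A v"
  unfolding antilinear_def by (metis add.right_neutral antilinear_0 antilinear_def)

lemma antilinear_scaleR: "antilinear A \<Longrightarrow> A (r *\<^sub>R v) = r *\<^sub>R A v"
  by (simp add: scaleR_eq_of_real_smult antilinear_smult)

lemma antilinear_diff: "antilinear A \<Longrightarrow> A (v - w) = A v - A w"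
  using antilinear_add[of A v "-w"] antilinear_scaleR[of A "-1" w] by simp

lemma linear_sqop: "antilinear A \<Longrightarrow> Vector_Spaces.linear (*s) (*s) (sqop A l)"
  unfolding Vector_Spaces.linear_iff sqop_def
  by (simp add: vec.vector_space_axioms antilinear_add antilinear_smult
      scaleR_eq_of_real_smult vec_eq_iff algebra_simps)

lemma linear_funpow:
  fixes f :: "complex^'n \<Rightarrow> complex^'n"
  shows "Vector_Spaces.linear (*s) (*s) f \<Longrightarrow> Vector_Spaces.linear (*s) (*s) (f ^^ j)"
  by (induction j) (simp_all add: id_def vec.linear_ident Vector_Spaces.linear_compose)

lemma linear_smult_scaleR:
  "Vector_Spaces.linear (*s) (*s) f \<Longrightarrow> f (r *\<^sub>R (v :: complex^'n)) = r *\<^sub>R f v"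
  by (simp add: scaleR_eq_of_real_smult vec.linear_scale)

lemma antilinear_commute_sqop_funpow:
  "antilinear A \<Longrightarrow> A ((sqop A l ^^ j) x) = (sqop A l ^^ j) (A x)"
  by (induction j) (simp_all add: sqop_def antilinear_diff antilinear_scaleR)

lemma sqop_eq_0_if_eigenvector:
  assumes "antilinear A" "A u = c *\<^sub>R u" "c\<^sup>2 = l\<^sup>2"
  shows "sqop A l u = 0"
  using assms by (simp add: sqop_def antilinear_scaleR power2_eq_square)

definition eigencomponent :: "(complex^'n \<Rightarrow> complex^'n) \<Rightarrow> real \<Rightarrow> complex^'n \<Rightarrow> complex^'n"
  where "eigencomponent A c x = (1 / (2 * c)) *\<^sub>R (A x + c *\<^sub>R x)"

lemma eigencomponent_add_uminus:
  assumes "c \<noteq> 0"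
  shows "eigencomponent A c x + eigencomponent A (- c) x = x"
proof -
  have "eigencomponent A (- c) x = (1 / (2 * c)) *\<^sub>R (c *\<^sub>R x - A x)"
    by (simp add: eigencomponent_def scaleR_diff_right)
  then have "eigencomponent A c x + eigencomponent A (- c) x
      = (1 / (2 * c)) *\<^sub>R ((A x + c *\<^sub>R x) + (c *\<^sub>R x - A x))"
    by (simp only: eigencomponent_def scaleR_add_right)
  also have "\<dots> = ((1 / (2 * c)) * (2 * c)) *\<^sub>R x"
    by (simp add: scaleR_add_left[symmetric])
  finally show ?thesis
    using assms by simp
qed

lemma eigencomponent_eigenvector:
  assumes "antilinear A" "sqop A l u = 0" "c\<^sup>2 = l\<^sup>2"
  shows "A (eigencomponent A c u) = c *\<^sub>R eigencomponent A c u"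
proof -
  have "A (A u) = (c * c) *\<^sub>R u"
    using assms(2,3) by (simp add: sqop_def power2_eq_square)
  then show ?thesis
    using assms(1)
    by (simp add: eigencomponent_def antilinear_add antilinear_scaleR algebra_simps)
qed

lemma sqop_funpow_eigencomponent:
  assumes "antilinear A"
  shows "(sqop A l ^^ j) (eigencomponent A c x) = eigencomponent A c ((sqop A l ^^ j) x)"
proof -
  have "Vector_Spaces.linear (*s) (*s) (sqop A l ^^ j)"
    by (rule linear_funpow[OF linear_sqop[OF assms]])
  then show ?thesis
    by (simp add: eigencomponent_def linear_smult_scaleR vec.linear_add
        antilinear_commute_sqop_funpow[OF assms])
qed

lemma Wk_Suc: "Wk A l (Suc j) = {x. sqop A l ((sqop A l ^^ j) x) = 0}"
  by (simp add: Wk_def)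

lemma Wplus_Suc: "Wplus A l (Suc j) = {x. A ((sqop A l ^^ j) x) = l *\<^sub>R (sqop A l ^^ j) x}"
  by (simp add: Wplus_def)

lemma Wminus_Suc: "Wminus A l (Suc j) = {x. A ((sqop A l ^^ j) x) = (- l) *\<^sub>R (sqop A l ^^ j) x}"
  by (auto simp: Wminus_def add_eq_0_iff2)

lemma subspace_Wk: "antilinear A \<Longrightarrow> vec.subspace (Wk A l k)"
  unfolding Wk_def by (rule vec.linear_subspace_kernel[OF linear_funpow[OF linear_sqop]])

lemma Wk_subset_Wk_Suc: "antilinear A \<Longrightarrow> Wk A l j \<subseteq> Wk A l (Suc j)"
  using vec.linear_0[OF linear_sqop] by (auto simp: Wk_def)

lemma Wplus_subset_Wk: "antilinear A \<Longrightarrow> Wplus A l (Suc j) \<subseteq> Wk A l (Suc j)"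
  by (auto simp: Wplus_Suc Wk_Suc intro: sqop_eq_0_if_eigenvector)

lemma Wminus_subset_Wk: "antilinear A \<Longrightarrow> Wminus A l (Suc j) \<subseteq> Wk A l (Suc j)"
  unfolding Wminus_Suc Wk_Suc by (auto intro: sqop_eq_0_if_eigenvector[where c = "- l"])

lemma eigencomponent_mem_Wplus:
  "antilinear A \<Longrightarrow> x \<in> Wk A l (Suc j) \<Longrightarrow> eigencomponent A l x \<in> Wplus A l (Suc j)"
  by (simp add: Wk_Suc Wplus_Suc sqop_funpow_eigencomponent eigencomponent_eigenvector)

lemma eigencomponent_mem_Wminus:
  "antilinear A \<Longrightarrow> x \<in> Wk A l (Suc j) \<Longrightarrow> eigencomponent A (- l) x \<in> Wminus A l (Suc j)"
  by (simp add: Wk_Suc Wminus_Suc sqop_funpow_eigencomponent eigencomponent_eigenvector)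

lemma Wk_eq_Wplus_plus_Wminus:
  assumes "antilinear A" "l \<noteq> 0"
  shows "{x + y | x y. x \<in> Wplus A l (Suc j) \<and> y \<in> Wminus A l (Suc j)} = Wk A l (Suc j)"
proof (intro equalityI subsetI)
  fix z assume "z \<in> {x + y | x y. x \<in> Wplus A l (Suc j) \<and> y \<in> Wminus A l (Suc j)}"
  then obtain x y where "z = x + y" "x \<in> Wplus A l (Suc j)" "y \<in> Wminus A l (Suc j)"
    by blast
  moreover have "x \<in> Wk A l (Suc j)" "y \<in> Wk A l (Suc j)"
    using calculation Wplus_subset_Wk[OF assms(1)] Wminus_subset_Wk[OF assms(1)] by blast+
  ultimately show "z \<in> Wk A l (Suc j)"
    by (simp add: vec.subspace_add[OF subspace_Wk[OF assms(1)]])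
next
  fix z assume "z \<in> Wk A l (Suc j)"
  then have "eigencomponent A l z \<in> Wplus A l (Suc j)" "eigencomponent A (- l) z \<in> Wminus A l (Suc j)"
    by (simp_all add: eigencomponent_mem_Wplus eigencomponent_mem_Wminus assms(1))
  moreover have "z = eigencomponent A l z + eigencomponent A (- l) z"
    by (simp add: eigencomponent_add_uminus assms(2))
  ultimately show "z \<in> {x + y | x y. x \<in> Wplus A l (Suc j) \<and> y \<in> Wminus A l (Suc j)}"
    by blast
qed

lemma Wplus_Int_Wminus:
  assumes "antilinear A" "l \<noteq> 0"
  shows "Wplus A l (Suc j) \<inter> Wminus A l (Suc j) = Wk A l j"
proof -
  have "(A v = l *\<^sub>R v \<and> A v = (- l) *\<^sub>R v) \<longleftrightarrow> v = 0" for v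
  proof -
    have "l *\<^sub>R v = (- l) *\<^sub>R v \<longleftrightarrow> (2 * l) *\<^sub>R v = 0"
      by (simp add: scaleR_left_distrib[symmetric] eq_neg_iff_add_eq_0 algebra_simps)
    then show ?thesis
      using assms by (auto simp: antilinear_0)
  qed
  then show ?thesis
    unfolding Wplus_Suc Wminus_Suc Wk_def Int_def by blast
qed

lemma imaginary_unit_smult_Wminus:
  assumes "antilinear A" "x \<in> Wminus A l (Suc j)"
  shows "\<i> *s x \<in> Wplus A l (Suc j)"
proof -
  let ?T = "sqop A l ^^ j"
  have T: "Vector_Spaces.linear (*s) (*s) ?T"
    by (rule linear_funpow[OF linear_sqop[OF assms(1)]])
  have "A (?T (\<i> *s x)) = - \<i> *s A (?T x)"
    by (simp add: vec.linear_scale[OF T] antilinear_smult[OF assms(1)])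
  also have "\<dots> = l *\<^sub>R ?T (\<i> *s x)"
    using assms(2) by (simp add: Wminus_Suc vec.linear_scale[OF T] scaleR_eq_of_real_smult vec_eq_iff)
  finally show ?thesis
    by (simp add: Wplus_Suc)
qed

lemma Wminus_subset_span_Wplus:
  assumes "antilinear A"
  shows "Wminus A l (Suc j) \<subseteq> vec.span (Wplus A l (Suc j))"
proof
  fix x assume "x \<in> Wminus A l (Suc j)"
  then have "(- \<i>) *s (\<i> *s x) \<in> vec.span (Wplus A l (Suc j))"
    by (intro vec.span_scale vec.span_base imaginary_unit_smult_Wminus[OF assms])
  then show "x \<in> vec.span (Wplus A l (Suc j))"
    by (simp add: vec_eq_iff)
qed

lemma Wk_eq_span_Wplus_plus_Wk:
  assumes "antilinear A" "l \<noteq> 0"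
  shows "{x + y | x y. x \<in> vec.span (Wplus A l (Suc j)) \<and> y \<in> Wk A l j} = Wk A l (Suc j)"
proof (intro equalityI subsetI)
  fix z assume "z \<in> {x + y | x y. x \<in> vec.span (Wplus A l (Suc j)) \<and> y \<in> Wk A l j}"
  then obtain x y where "z = x + y" "x \<in> vec.span (Wplus A l (Suc j))" "y \<in> Wk A l j"
    by blast
  moreover have "vec.span (Wplus A l (Suc j)) \<subseteq> Wk A l (Suc j)"
    using Wplus_subset_Wk[OF assms(1)] subspace_Wk[OF assms(1)] by (rule vec.span_minimal)
  ultimately have "z = x + y" "x \<in> Wk A l (Suc j)" "y \<in> Wk A l (Suc j)"
    using Wk_subset_Wk_Suc[OF assms(1)] by blast+
  then show "z \<in> Wk A l (Suc j)"
    by (simp add: vec.subspace_add[OF subspace_Wk[OF assms(1)]])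
next
  fix z assume "z \<in> Wk A l (Suc j)"
  then obtain a b where "z = a + b" "a \<in> Wplus A l (Suc j)" "b \<in> Wminus A l (Suc j)"
    using Wk_eq_Wplus_plus_Wminus[OF assms, of j] by blast
  then have "z \<in> vec.span (Wplus A l (Suc j))"
    using Wminus_subset_span_Wplus[OF assms(1)] by (auto intro: vec.span_add vec.span_base)
  moreover have "0 \<in> Wk A l j"
    by (rule vec.subspace_0[OF subspace_Wk[OF assms(1)]])
  ultimately show "z \<in> {x + y | x y. x \<in> vec.span (Wplus A l (Suc j)) \<and> y \<in> Wk A l j}"
    by force
qed

theorem mainTheorem4:
  fixes A :: "complex^'n \<Rightarrow> complex^'n" and l :: real and k :: nat
  assumes "antilinear A" and "l > 0" and "k \<ge> 1"
  shows "{x + y | x y. x \<in> Wplus A l k \<and> y \<in> Wminus A l k} = Wk A l k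
       \<and> Wplus A l k \<inter> Wminus A l k = Wk A l (k - 1)
       \<and> {x + y | x y. x \<in> vec.span (Wplus A l k) \<and> y \<in> Wk A l (k - 1)} = Wk A l k"
proof -
  obtain j where k: "k = Suc j"
    using assms(3) by (cases k) auto
  have "l \<noteq> 0"
    using assms(2) by simp
  then show ?thesis
    unfolding k using assms(1)
    by (simp add: Wk_eq_Wplus_plus_Wminus Wplus_Int_Wminus Wk_eq_span_Wplus_plus_Wk)
qed

end
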